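(* Let $\boldsymbol\Sigma$ be the covariance matrix of a pure two-mode Gaussian state of a signal mode $S$ and an idler mode $I$. Then there exist a phase rotation acting on $S$ and a symplectic transformation acting on $I$ such that the transformed covariance matrix has the form $\begin{bmatrix}\boldsymbol\Sigma_S&\boldsymbol\Sigma_{SI}\\ \boldsymbol\Sigma_{SI}^\top&\boldsymbol\Sigma_I\end{bmatrix}$ with $$\boldsymbol\Sigma_S=\mathrm{diag}(ar,\,ar^{-1}),\quad \boldsymbol\Sigma_I=\mathrm{diag}(a,a),\quad \boldsymbol\Sigma_{SI}=\sqrt{a^2-\tfrac14}\begin{bmatrix}\sqrt r\cos\phi&\sqrt r\sin\phi\\ \sqrt{r^{-1}}\sin\phi&-\sqrt{r^{-1}}\cos\phi\end{bmatrix}$$ for some $a\ge\tfrac12$, $r>0$ and $\phi\in\mathbb{R}$.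
   Context: Quadrature vector $\mathbf R=(q_S,p_S,q_I,p_I)^\top$ with $[R_i,R_j]=\mathrm{i}\Omega_{ij}$, $\boldsymbol\Omega=\mathbb{I}_2\otimes\begin{bmatrix}0&1\\-1&0\end{bmatrix}$; covariance matrix $\Sigma_{ij}=\tfrac12\langle R_iR_j+R_jR_i\rangle-\langle R_i\rangle\langle R_j\rangle$ (vacuum has $\boldsymbol\Sigma=\mathbb{I}_4/2$). A phase rotation on $S$ acts on the covariance matrix by conjugation with $\mathbf R(\varphi)\oplus\mathbb{I}_2$, $\mathbf R(\varphi)=\begin{bmatrix}\cos\varphi&-\sin\varphi\\ \sin\varphi&\cos\varphi\end{bmatrix}$; a symplectic transformation $\mathbf S_I$ on $I$ acts by conjugation with $\mathbb{I}_2\oplus\mathbf S_I$. *)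

theory Defs
  imports "HOL-Analysis.Analysis" "HOL-Library.Numeral_Type"
begin

text \<open>Quadrature ordering R = (q_S, p_S, q_I, p_I), indexed by the type 4 as 0,1,2,3.
  Mode S occupies indices 0,1 and mode I occupies indices 2,3.\<close>

definition mat2 :: "real \<Rightarrow> real \<Rightarrow> real \<Rightarrow> real \<Rightarrow> real^2^2" where
  "mat2 a b c d = (\<chi> i j. if i = 0 then (if j = 0 then a else b) else (if j = 0 then c else d))"

definition in_first_mode :: "4 \<Rightarrow> bool" where
  "in_first_mode i \<longleftrightarrow> i = 0 \<or> i = 1"

definition local_idx :: "4 \<Rightarrow> 2" where
  "local_idx i = (if i = 0 \<or> i = 2 then 0 else 1)"

definition blk :: "real^2^2 \<Rightarrow> real^2^2 \<Rightarrow> real^2^2 \<Rightarrow> real^2^2 \<Rightarrow> real^4^4" where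
  "blk A B C D = (\<chi> i j.
     if in_first_mode i then
       (if in_first_mode j then A $ local_idx i $ local_idx j else B $ local_idx i $ local_idx j)
     else
       (if in_first_mode j then C $ local_idx i $ local_idx j else D $ local_idx i $ local_idx j))"

definition J2 :: "real^2^2" where
  "J2 = mat2 0 1 (-1) 0"

definition Omega :: "real^4^4" where
  "Omega = blk J2 0 0 J2"

definition symplectic4 :: "real^4^4 \<Rightarrow> bool" where
  "symplectic4 S \<longleftrightarrow> S ** Omega ** transpose S = Omega"

definition symplectic2 :: "real^2^2 \<Rightarrow> bool" where
  "symplectic2 S \<longleftrightarrow> S ** J2 ** transpose S = J2"

text \<open>Covariance matrix of a pure two-mode Gaussian state: a Gaussian unitary
  (symplectic S) applied to the vacuum, whose covariance matrix is I_4/2.\<close>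
definition pure_gaussian_cov :: "real^4^4 \<Rightarrow> bool" where
  "pure_gaussian_cov \<Sigma> \<longleftrightarrow> (\<exists>S. symplectic4 S \<and> \<Sigma> = S ** ((1/2) *\<^sub>R mat 1) ** transpose S)"

definition rot :: "real \<Rightarrow> real^2^2" where
  "rot \<phi> = mat2 (cos \<phi>) (- sin \<phi>) (sin \<phi>) (cos \<phi>)"

end

theory Submission
  imports Defs
begin

text \<open>
  Write \<open>\<Sigma> = S S\<^sup>T / 2\<close> with \<open>S\<close> symplectic.  Then \<open>\<Sigma> \<Omega> \<Sigma> = \<Omega> / 4\<close> and \<open>\<Sigma>\<close> is positive
  definite, and both properties survive congruence by symplectic maps.  A rotation
  diagonalises the signal block; a shear followed by a squeeze turns the idler block into
  \<open>a I\<close>, with \<open>a\<close> the square root of its determinant.  Read blockwise, \<open>\<Sigma> \<Omega> \<Sigma> = \<Omega> / 4\<close> now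
  gives \<open>det \<Sigma>\<^sub>S = a\<^sup>2\<close> and \<open>det \<Sigma>\<^sub>S\<^sub>I = 1/4 - a\<^sup>2\<close>, while its off-diagonal block expresses the
  first row of \<open>\<Sigma>\<^sub>S\<^sub>I\<close> through the second row and \<open>r = (\<Sigma>\<^sub>S)\<^sub>1\<^sub>1 / a\<close>.  The second row,
  scaled by \<open>sqrt r\<close>, has length \<open>sqrt (a\<^sup>2 - 1/4)\<close>, which forces \<open>a \<ge> 1/2\<close>; its polar
  angle is \<open>\<phi>\<close>.
\<close>

section \<open>Zero-based indices and 2-by-2 blocks\<close>

lemma exhaust_4_zero_based:
  fixes i :: 4
  shows "i = 0 \<or> i = 1 \<or> i = 2 \<or> i = 3"
proof (induct i)
  case (of_int z)
  then have "z = 0 \<or> z = 1 \<or> z = 2 \<or> z = 3" by fastforce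
  then show ?case by auto
qed

lemma exhaust_2_zero_based:
  fixes i :: 2
  shows "i = 0 \<or> i = 1"
proof (induct i)
  case (of_int z)
  then have "z = 0 \<or> z = 1" by fastforce
  then show ?case by auto
qed

lemma forall_4_zero_based: "(\<forall>i::4. P i) \<longleftrightarrow> P 0 \<and> P 1 \<and> P 2 \<and> P 3"
  by (metis exhaust_4_zero_based)

lemma forall_2_zero_based: "(\<forall>i::2. P i) \<longleftrightarrow> P 0 \<and> P 1"
  by (metis exhaust_2_zero_based)

lemma sum_4_zero_based: "sum f (UNIV::4 set) = f 0 + f 1 + f 2 + f 3"
proof -
  have univ: "(UNIV::4 set) = set [0, 1, 2, 3]"
    using exhaust_4_zero_based by auto
  have "distinct [0, 1, 2, 3 :: 4]" by simp
  then show ?thesis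
    unfolding univ sum.distinct_set_conv_list by (simp add: ac_simps)
qed

lemma sum_2_zero_based: "sum f (UNIV::2 set) = f 0 + f 1"
proof -
  have univ: "(UNIV::2 set) = set [0, 1]"
    using exhaust_2_zero_based by auto
  have "distinct [0, 1 :: 2]" by simp
  then show ?thesis
    unfolding univ sum.distinct_set_conv_list by simp
qed

lemma mat2_nth [simp]:
  "mat2 a b c d $ 0 $ 0 = a" "mat2 a b c d $ 0 $ 1 = b"
  "mat2 a b c d $ 1 $ 0 = c" "mat2 a b c d $ 1 $ 1 = d"
  by (simp_all add: mat2_def)

lemma mat2_eta: "A = mat2 (A$0$0) (A$0$1) (A$1$0) (A$1$1)"
  by (simp add: vec_eq_iff forall_2_zero_based)

lemma mat2_eq_iff:
  "mat2 a b c d = mat2 a' b' c' d' \<longleftrightarrow> a = a' \<and> b = b' \<and> c = c' \<and> d = d'"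
  by (auto simp: vec_eq_iff forall_2_zero_based)

lemma mat2_mult:
  "mat2 a b c d ** mat2 a' b' c' d' =
     mat2 (a*a' + b*c') (a*b' + b*d') (c*a' + d*c') (c*b' + d*d')"
  by (simp add: vec_eq_iff forall_2_zero_based matrix_matrix_mult_def sum_2_zero_based)

lemma transpose_mat2: "transpose (mat2 a b c d) = mat2 a c b d"
  by (simp add: vec_eq_iff forall_2_zero_based transpose_def)

lemma scaleR_mat2: "k *\<^sub>R mat2 a b c d = mat2 (k*a) (k*b) (k*c) (k*d)"
  by (simp add: vec_eq_iff forall_2_zero_based)

lemma add_mat2: "mat2 a b c d + mat2 a' b' c' d' = mat2 (a + a') (b + b') (c + c') (d + d')"
  by (simp add: vec_eq_iff forall_2_zero_based)

lemma zero_mat2: "(0::real^2^2) = mat2 0 0 0 0"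
  by (simp add: vec_eq_iff forall_2_zero_based)

lemma mat1_mat2: "(mat 1 :: real^2^2) = mat2 1 0 0 1"
  by (simp add: vec_eq_iff forall_2_zero_based mat_def)

lemmas mat2_simps = mat2_mult transpose_mat2 scaleR_mat2 add_mat2 mat2_eq_iff

lemma transpose_zero [simp]: "transpose 0 = 0"
  by (simp add: transpose_def vec_eq_iff)

lemmas blk_unfold = blk_def in_first_mode_def local_idx_def

lemma blk_eq_iff:
  "blk A B C D = blk A' B' C' D' \<longleftrightarrow> A = A' \<and> B = B' \<and> C = C' \<and> D = D'"
  by (auto simp: vec_eq_iff forall_4_zero_based forall_2_zero_based blk_unfold)

lemma blk_mult:
  "blk A B C D ** blk A' B' C' D' =
     blk (A ** A' + B ** C') (A ** B' + B ** D') (C ** A' + D ** C') (C ** B' + D ** D')"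
  by (simp add: vec_eq_iff forall_4_zero_based forall_2_zero_based matrix_matrix_mult_def
      sum_4_zero_based sum_2_zero_based blk_unfold)

lemma transpose_blk:
  "transpose (blk A B C D) = blk (transpose A) (transpose C) (transpose B) (transpose D)"
  by (simp add: vec_eq_iff forall_4_zero_based transpose_def blk_unfold)

lemma scaleR_blk: "k *\<^sub>R blk A B C D = blk (k *\<^sub>R A) (k *\<^sub>R B) (k *\<^sub>R C) (k *\<^sub>R D)"
  by (simp add: vec_eq_iff forall_4_zero_based blk_unfold)

lemma mat1_blk: "(mat 1 :: real^4^4) = blk (mat 1) 0 0 (mat 1)"
  by (simp add: vec_eq_iff forall_4_zero_based blk_unfold mat_def)

lemma blk_diag_congruence:
  "blk P 0 0 Q ** blk A B (transpose B) D ** transpose (blk P 0 0 Q) =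
     blk (P ** A ** transpose P) (P ** B ** transpose Q) (transpose (P ** B ** transpose Q))
         (Q ** D ** transpose Q)"
  by (simp add: blk_mult transpose_blk matrix_transpose_mul matrix_mul_assoc)

lemma symmetric_blk_cases:
  fixes X :: "real^4^4"
  assumes "transpose X = X"
  obtains x y z B u v w where "X = blk (mat2 x y y z) B (transpose B) (mat2 u v v w)"
proof
  have sym: "X $ j $ i = X $ i $ j" for i j
    using arg_cong[OF assms, of "\<lambda>M. M $ i $ j"] by (simp add: transpose_def)
  show "X = blk (mat2 (X$0$0) (X$0$1) (X$0$1) (X$1$1)) (mat2 (X$0$2) (X$0$3) (X$1$2) (X$1$3))
      (transpose (mat2 (X$0$2) (X$0$3) (X$1$2) (X$1$3))) (mat2 (X$2$2) (X$2$3) (X$2$3) (X$3$3))"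
    by (simp add: vec_eq_iff forall_4_zero_based blk_unfold transpose_mat2
        sym[of 0 1] sym[of 0 2] sym[of 0 3] sym[of 1 2] sym[of 1 3] sym[of 2 3])
qed

section \<open>Symplectic matrices and pure Gaussian covariance matrices\<close>

lemma symplectic2_mat2: "symplectic2 (mat2 a b c d) \<longleftrightarrow> a*d - b*c = 1"
  by (simp add: symplectic2_def J2_def mat2_simps) argo

lemma symplectic2_rot: "symplectic2 (rot \<theta>)"
  by (simp add: rot_def symplectic2_mat2 flip: power2_eq_square)

lemma Omega_orthogonal: "transpose Omega ** Omega = mat 1" "Omega ** transpose Omega = mat 1"
  by (simp_all add: Omega_def J2_def blk_mult transpose_blk mat1_blk zero_mat2 mat1_mat2 mat2_simps)

lemma symplectic4_blk:
  assumes "symplectic2 P" and "symplectic2 Q"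
  shows "symplectic4 (blk P 0 0 Q)"
  using assms by (simp add: symplectic4_def symplectic2_def Omega_def blk_mult transpose_blk)

lemma symplectic4_mult:
  assumes "symplectic4 S" and "symplectic4 T"
  shows "symplectic4 (T ** S)"
proof -
  have "(T ** S) ** Omega ** transpose (T ** S) = T ** (S ** Omega ** transpose S) ** transpose T"
    by (simp add: matrix_transpose_mul matrix_mul_assoc)
  with assms show ?thesis by (simp add: symplectic4_def)
qed

lemma symplectic4_left_inverse:
  assumes "symplectic4 S"
  shows "(transpose Omega ** S ** Omega) ** transpose S = mat 1"
proof -
  have "(transpose Omega ** S ** Omega) ** transpose S = transpose Omega ** (S ** Omega ** transpose S)"
    by (simp add: matrix_mul_assoc)
  with assms show ?thesis by (simp add: symplectic4_def Omega_orthogonal)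
qed

lemma symplectic4_transpose:
  assumes "symplectic4 S"
  shows "symplectic4 (transpose S)"
proof -
  have "transpose S ** (transpose Omega ** S ** Omega) = mat 1"
    using symplectic4_left_inverse[OF assms] matrix_left_right_inverse by blast
  then have "transpose S ** transpose Omega ** S ** (Omega ** transpose Omega) = transpose Omega"
    by (simp add: matrix_mul_assoc)
  then have "transpose (transpose S ** transpose Omega ** S) = Omega"
    by (simp add: Omega_orthogonal)
  then show ?thesis
    by (simp add: symplectic4_def matrix_transpose_mul matrix_mul_assoc)
qed

definition positive_definite :: "real^'n^'n \<Rightarrow> bool" where
  "positive_definite A \<longleftrightarrow> (\<forall>x. x \<noteq> 0 \<longrightarrow> 0 < x \<bullet> (A *v x))"

lemma matrix_vector_mult_axis_nth: "(A *v axis j 1) $ i = A $ i $ j"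
  for A :: "real^'n^'m"
  by (simp add: matrix_vector_mult_basis column_def)

lemma positive_definite_diag_pos:
  assumes "positive_definite A"
  shows "0 < A $ i $ i"
  using assms[unfolded positive_definite_def, rule_format, of "axis i 1"]
  by (simp add: inner_axis' matrix_vector_mult_axis_nth)

lemma positive_definite_minor_pos:
  assumes pd: "positive_definite A" and sym: "transpose A = A" and "i \<noteq> j"
  shows "(A $ i $ j)\<^sup>2 < A $ i $ i * A $ j $ j"
proof -
  define x where "x = A $ i $ j *\<^sub>R axis i 1 - A $ i $ i *\<^sub>R axis j (1::real)"
  have "A $ j $ i = A $ i $ j"
    using arg_cong[OF sym, of "\<lambda>M. M $ i $ j"] by (simp add: transpose_def)
  then have "x \<bullet> (A *v x) = A $ i $ i * (A $ i $ i * A $ j $ j - (A $ i $ j)\<^sup>2)"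
    unfolding x_def
    by (simp add: algebra_simps inner_axis' matrix_vector_mult_axis_nth power2_eq_square)
  moreover have "x \<noteq> 0"
  proof
    assume "x = 0"
    then have "x $ j = 0" by simp
    with \<open>i \<noteq> j\<close> have "A $ i $ i = 0" by (simp add: x_def axis_def)
    with positive_definite_diag_pos[OF pd, of i] show False by simp
  qed
  ultimately have "0 < A $ i $ i * (A $ i $ i * A $ j $ j - (A $ i $ j)\<^sup>2)"
    using pd unfolding positive_definite_def by metis
  with positive_definite_diag_pos[OF pd, of i] show ?thesis
    by (simp add: zero_less_mult_iff)
qed

lemma congruence_half_identity:
  fixes S :: "real^'n^'m"
  shows "S ** ((1/2) *\<^sub>R mat 1) ** transpose S = (1/2) *\<^sub>R (S ** transpose S)"
  by (simp add: matrix_scalar_ac flip: scalar_matrix_assoc)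

lemma pure_gaussian_cov_congruence:
  assumes "pure_gaussian_cov \<Sigma>" and "symplectic4 T"
  shows "pure_gaussian_cov (T ** \<Sigma> ** transpose T)"
proof -
  obtain S where "symplectic4 S" and "\<Sigma> = S ** ((1/2) *\<^sub>R mat 1) ** transpose S"
    using assms(1) by (auto simp: pure_gaussian_cov_def)
  then have "symplectic4 (T ** S)"
    and "T ** \<Sigma> ** transpose T = (T ** S) ** ((1/2) *\<^sub>R mat 1) ** transpose (T ** S)"
    using assms(2) by (simp_all add: symplectic4_mult matrix_transpose_mul matrix_mul_assoc)
  then show ?thesis by (auto simp: pure_gaussian_cov_def)
qed

lemma pure_gaussian_cov_symmetric:
  assumes "pure_gaussian_cov \<Sigma>"
  shows "transpose \<Sigma> = \<Sigma>"
  using assms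
  by (auto simp: pure_gaussian_cov_def congruence_half_identity transpose_scalar matrix_transpose_mul)

lemma pure_gaussian_cov_purity:
  assumes "pure_gaussian_cov \<Sigma>"
  shows "\<Sigma> ** Omega ** \<Sigma> = (1/4) *\<^sub>R Omega"
proof -
  obtain S where S: "symplectic4 S" and \<Sigma>: "\<Sigma> = (1/2) *\<^sub>R (S ** transpose S)"
    using assms by (auto simp: pure_gaussian_cov_def congruence_half_identity)
  have "\<Sigma> ** Omega ** \<Sigma> = (1/4) *\<^sub>R (S ** (transpose S ** Omega ** S) ** transpose S)"
    by (simp add: \<Sigma> matrix_scalar_ac matrix_mul_assoc flip: scalar_matrix_assoc)
  also have "\<dots> = (1/4) *\<^sub>R Omega"
    using S symplectic4_transpose[OF S] by (simp add: symplectic4_def)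
  finally show ?thesis .
qed

lemma pure_gaussian_cov_positive_definite:
  assumes "pure_gaussian_cov \<Sigma>"
  shows "positive_definite \<Sigma>"
  unfolding positive_definite_def
proof (intro allI impI)
  fix x :: "real^4"
  assume "x \<noteq> 0"
  obtain S where S: "symplectic4 S" and \<Sigma>: "\<Sigma> = (1/2) *\<^sub>R (S ** transpose S)"
    using assms by (auto simp: pure_gaussian_cov_def congruence_half_identity)
  have "transpose S *v x \<noteq> 0"
    using symplectic4_left_inverse[OF S] matrix_left_invertible_ker \<open>x \<noteq> 0\<close> by blast
  then have "0 < (transpose S *v x) \<bullet> (transpose S *v x)"
    by simp
  moreover have "x \<bullet> (\<Sigma> *v x) = (1/2) * ((transpose S *v x) \<bullet> (transpose S *v x))"
    by (simp add: \<Sigma> dot_lmul_matrix flip: scaleR_matrix_vector_assoc matrix_vector_mul_assoc)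
  ultimately show "0 < x \<bullet> (\<Sigma> *v x)"
    by linarith
qed

section \<open>Normal forms\<close>

lemma polar_coordinates:
  obtains \<phi> where "p = sqrt (p\<^sup>2 + q\<^sup>2) * cos \<phi>" and "q = sqrt (p\<^sup>2 + q\<^sup>2) * sin \<phi>"
proof
  let ?z = "Complex p q"
  have "rcis (cmod ?z) (Arg ?z) = ?z" by (rule rcis_cmod_Arg)
  then have "Re (rcis (cmod ?z) (Arg ?z)) = p" and "Im (rcis (cmod ?z) (Arg ?z)) = q"
    by simp_all
  then show "p = sqrt (p\<^sup>2 + q\<^sup>2) * cos (Arg ?z)" and "q = sqrt (p\<^sup>2 + q\<^sup>2) * sin (Arg ?z)"
    by (simp_all add: complex_norm)
qed

lemma rot_diagonalizes_symmetric:
  obtains \<theta> x' z' where "rot \<theta> ** mat2 x y y z ** transpose (rot \<theta>) = mat2 x' 0 0 z'"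
proof -
  define n where "n = sqrt ((x - z)\<^sup>2 + (-2 * y)\<^sup>2)"
  obtain t where t: "x - z = n * cos t" "-2 * y = n * sin t"
    unfolding n_def by (rule polar_coordinates)
  define c s where "c = cos (t/2)" and "s = sin (t/2)"
  have double: "cos t = c\<^sup>2 - s\<^sup>2" "sin t = 2 * s * c"
    using cos_double[of "t/2"] sin_double[of "t/2"] by (simp_all add: c_def s_def)
  have "c * s * (x - z) + (c\<^sup>2 - s\<^sup>2) * y = (sin t * (x - z) - cos t * (-2 * y)) / 2"
    unfolding double by (simp add: field_simps)
  also have "\<dots> = 0"
    unfolding t by (simp add: algebra_simps)
  finally have "c * s * (x - z) + (c\<^sup>2 - s\<^sup>2) * y = 0" .
  then show ?thesis
    by (intro that[of "t/2" "c\<^sup>2 * x - 2 * c * s * y + s\<^sup>2 * z" "s\<^sup>2 * x + 2 * c * s * y + c\<^sup>2 * z"])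
      (auto simp: rot_def mat2_simps c_def s_def algebra_simps power2_eq_square)
qed

lemma symplectic2_normal_form:
  assumes "0 < u" and "v\<^sup>2 < u * w"
  obtains Q where "symplectic2 Q"
    and "Q ** mat2 u v v w ** transpose Q = mat2 (sqrt (u * w - v\<^sup>2)) 0 0 (sqrt (u * w - v\<^sup>2))"
proof
  define b where "b = sqrt (u * w - v\<^sup>2)"
  define s t where "s = sqrt u" and "t = sqrt b"
  have "0 < b" using assms(2) by (simp add: b_def)
  then have "0 < s" "0 < t" "s\<^sup>2 = u" "t\<^sup>2 = b" "b\<^sup>2 = u * w - v\<^sup>2"
    using assms by (simp_all add: s_def t_def b_def)
  then show "symplectic2 (mat2 (t / s) 0 (- v / (t * s)) (s / t))"
    and "mat2 (t / s) 0 (- v / (t * s)) (s / t) ** mat2 u v v w **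
        transpose (mat2 (t / s) 0 (- v / (t * s)) (s / t)) = mat2 b 0 0 b"
    by (auto simp: symplectic2_mat2 mat2_simps field_simps power2_eq_square) (metis distrib_left)
qed

definition standard_correlation :: "real \<Rightarrow> real \<Rightarrow> real \<Rightarrow> real^2^2" where
  "standard_correlation a r \<phi> =
     sqrt (a\<^sup>2 - 1/4) *\<^sub>R mat2 (sqrt r * cos \<phi>) (sqrt r * sin \<phi>)
                              (sqrt (inverse r) * sin \<phi>) (- sqrt (inverse r) * cos \<phi>)"

definition standard_form_cov :: "real \<Rightarrow> real \<Rightarrow> real \<Rightarrow> real^4^4" where
  "standard_form_cov a r \<phi> =
     blk (mat2 (a * r) 0 0 (a / r)) (standard_correlation a r \<phi>)
         (transpose (standard_correlation a r \<phi>)) (mat2 a 0 0 a)"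

lemma two_mode_normal_form_coefficients:
  fixes x y a b0 b1 b2 b3 :: real
  assumes "0 < x" and "0 < a"
    and det: "x * y + (b0 * b3 - b1 * b2) = 1/4" "b0 * b3 - b1 * b2 + a\<^sup>2 = 1/4"
    and cross: "x * b2 = a * b1" "x * b3 = - (a * b0)"
  obtains r \<phi> where "1/2 \<le> a" "0 < r" "x = a * r" "y = a / r"
    "b0 = sqrt (a\<^sup>2 - 1/4) * (sqrt r * cos \<phi>)" "b1 = sqrt (a\<^sup>2 - 1/4) * (sqrt r * sin \<phi>)"
    "b2 = sqrt (a\<^sup>2 - 1/4) * (sqrt (inverse r) * sin \<phi>)"
    "b3 = sqrt (a\<^sup>2 - 1/4) * (- sqrt (inverse r) * cos \<phi>)"
proof -
  define r where "r = x / a"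
  have r: "0 < r" "x = a * r"
    using assms(1,2) by (simp_all add: r_def)
  have "x * y = a\<^sup>2"
    using det by linarith
  then have "a * (r * y) = a * a"
    using r by (simp add: power2_eq_square mult.assoc)
  then have y: "y = a / r"
    using r \<open>0 < a\<close> by (simp add: field_simps)
  have "a * (b0 + r * b3) = 0" and "a * (b1 - r * b2) = 0"
    using cross r by (auto simp: algebra_simps)
  then have b0: "b0 = - (r * b3)" and b1: "b1 = r * b2"
    using \<open>0 < a\<close> by simp_all
  have sqrt_r: "sqrt r * sqrt r = r" "sqrt (inverse r) = inverse (sqrt r)" "0 < sqrt r"
    using r by (simp_all add: real_sqrt_inverse)
  define p q where "p = - (sqrt r * b3)" and "q = sqrt r * b2"
  have "p\<^sup>2 + q\<^sup>2 = a\<^sup>2 - 1/4"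
    using det(2) sqrt_r unfolding b0 b1 p_def q_def by (simp add: power2_eq_square algebra_simps)
  moreover obtain \<phi> where "p = sqrt (p\<^sup>2 + q\<^sup>2) * cos \<phi>" "q = sqrt (p\<^sup>2 + q\<^sup>2) * sin \<phi>"
    by (rule polar_coordinates)
  ultimately have \<phi>: "p = sqrt (a\<^sup>2 - 1/4) * cos \<phi>" "q = sqrt (a\<^sup>2 - 1/4) * sin \<phi>"
    by simp_all
  have "1/4 \<le> a\<^sup>2"
    using \<open>p\<^sup>2 + q\<^sup>2 = a\<^sup>2 - 1/4\<close> by (smt (verit) zero_le_power2)
  then have "(1/2)\<^sup>2 \<le> a\<^sup>2"
    by (simp add: power_divide)
  then have "1/2 \<le> a"
    by (rule power2_le_imp_le) (use \<open>0 < a\<close> in simp)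
  have "b0 = sqrt r * p" "b1 = sqrt r * q" "b2 = sqrt (inverse r) * q" "b3 = - (sqrt (inverse r) * p)"
    using sqrt_r unfolding b0 b1 p_def q_def by (simp_all add: mult.assoc[symmetric])
  with \<phi> show ?thesis
    by (intro that[of r \<phi>, OF \<open>1/2 \<le> a\<close> r y]) (simp_all add: ac_simps)
qed

lemma pure_gaussian_cov_normal_form:
  assumes pure: "pure_gaussian_cov M"
    and M: "M = blk (mat2 x 0 0 y) B (transpose B) (mat2 a 0 0 a)"
  obtains r \<phi> where "1/2 \<le> a" and "0 < r" and "M = standard_form_cov a r \<phi>"
proof -
  obtain b0 b1 b2 b3 where B: "B = mat2 b0 b1 b2 b3"
    by (metis mat2_eta)
  have pd: "positive_definite M"
    by (rule pure_gaussian_cov_positive_definite[OF pure])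
  have "0 < x" "0 < a"
    using positive_definite_diag_pos[OF pd, of 0] positive_definite_diag_pos[OF pd, of 2]
    by (simp_all add: M blk_unfold)
  have "M ** Omega ** M = (1/4) *\<^sub>R Omega"
    by (rule pure_gaussian_cov_purity[OF pure])
  then have det: "x * y + (b0 * b3 - b1 * b2) = 1/4" "b0 * b3 - b2 * b1 + a * a = 1/4"
    and cross: "a * b1 = b2 * x" "- (b3 * x) = a * b0"
    by (simp_all add: M B Omega_def J2_def blk_mult scaleR_blk transpose_blk zero_mat2 mat2_simps
        blk_eq_iff)
  have "b0 * b3 - b1 * b2 + a\<^sup>2 = 1/4" "x * b2 = a * b1" "x * b3 = - (a * b0)"
    using det(2) cross by (simp_all add: algebra_simps power2_eq_square)
  with \<open>0 < x\<close> \<open>0 < a\<close> det(1) obtain r \<phi> where "1/2 \<le> a" "0 < r" "x = a * r" "y = a / r"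
    "b0 = sqrt (a\<^sup>2 - 1/4) * (sqrt r * cos \<phi>)" "b1 = sqrt (a\<^sup>2 - 1/4) * (sqrt r * sin \<phi>)"
    "b2 = sqrt (a\<^sup>2 - 1/4) * (sqrt (inverse r) * sin \<phi>)"
    "b3 = sqrt (a\<^sup>2 - 1/4) * (- sqrt (inverse r) * cos \<phi>)"
    by (rule two_mode_normal_form_coefficients)
  then show ?thesis
    by (intro that[of r \<phi>])
      (simp_all add: M B standard_form_cov_def standard_correlation_def scaleR_mat2)
qed

theorem lemma3:
  fixes \<Sigma> :: "real^4^4"
  assumes "pure_gaussian_cov \<Sigma>"
  shows "\<exists>\<phi>0 SI a r \<phi>. symplectic2 SI \<and> a \<ge> 1/2 \<and> r > 0 \<and>
     (let T = blk (rot \<phi>0) 0 0 SI in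
        T ** \<Sigma> ** transpose T =
        blk (mat2 (a * r) 0 0 (a / r))
            (sqrt (a\<^sup>2 - 1/4) *\<^sub>R mat2 (sqrt r * cos \<phi>) (sqrt r * sin \<phi>)
                                      (sqrt (inverse r) * sin \<phi>) (- sqrt (inverse r) * cos \<phi>))
            (transpose (sqrt (a\<^sup>2 - 1/4) *\<^sub>R mat2 (sqrt r * cos \<phi>) (sqrt r * sin \<phi>)
                                      (sqrt (inverse r) * sin \<phi>) (- sqrt (inverse r) * cos \<phi>)))
            (mat2 a 0 0 a))"
proof -
  have sym: "transpose \<Sigma> = \<Sigma>" and pd: "positive_definite \<Sigma>"
    using assms by (rule pure_gaussian_cov_symmetric pure_gaussian_cov_positive_definite)+
  obtain x y z B u v w where \<Sigma>: "\<Sigma> = blk (mat2 x y y z) B (transpose B) (mat2 u v v w)"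
    using symmetric_blk_cases[OF sym] .
  have "0 < u" "v\<^sup>2 < u * w"
    using positive_definite_diag_pos[OF pd, of 2] positive_definite_minor_pos[OF pd sym, of 2 3]
    by (simp_all add: \<Sigma> blk_unfold)
  obtain \<theta> x' z' where rot: "rot \<theta> ** mat2 x y y z ** transpose (rot \<theta>) = mat2 x' 0 0 z'"
    by (rule rot_diagonalizes_symmetric)
  define a where "a = sqrt (u * w - v\<^sup>2)"
  obtain Q where Q: "symplectic2 Q" "Q ** mat2 u v v w ** transpose Q = mat2 a 0 0 a"
    unfolding a_def using symplectic2_normal_form[OF \<open>0 < u\<close> \<open>v\<^sup>2 < u * w\<close>] .
  define T where "T = blk (rot \<theta>) 0 0 Q"
  have "pure_gaussian_cov (T ** \<Sigma> ** transpose T)"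
    using assms symplectic4_blk[OF symplectic2_rot Q(1)] by (simp add: T_def pure_gaussian_cov_congruence)
  moreover have "T ** \<Sigma> ** transpose T = blk (mat2 x' 0 0 z') (rot \<theta> ** B ** transpose Q)
      (transpose (rot \<theta> ** B ** transpose Q)) (mat2 a 0 0 a)"
    by (simp add: T_def \<Sigma> blk_diag_congruence rot Q(2))
  ultimately obtain r \<phi> where "1/2 \<le> a" "0 < r" "T ** \<Sigma> ** transpose T = standard_form_cov a r \<phi>"
    by (rule pure_gaussian_cov_normal_form)
  with Q(1) show ?thesis
    unfolding T_def Let_def standard_form_cov_def standard_correlation_def by blast
qed

end
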